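(* Let $A_0, A_1 : [\sigma_0,\sigma_1]\times[\tau_0,\tau_1] \to \mathbb{C}^{n\times n}$ be continuously differentiable matrix-valued functions. For $\sigma\in[\sigma_0,\sigma_1]$ and $\tau\in[\tau_0,\tau_1]$ define the path-ordered (product-integral) phase factors $$P(\sigma,\sigma_0;\tau)=\prod_{\sigma_0}^{\sigma} e^{A_1(\sigma';\tau)\,d\sigma'},\qquad Q(\sigma;\tau,\tau_0)=\prod_{\tau_0}^{\tau} e^{A_0(\sigma;\tau')\,d\tau'},$$ the matrix $$T(\sigma;\tau)=P(\sigma,\sigma_0;\tau)\,Q(\sigma_0;\tau,\tau_0),$$ and the loop operator $$W=Q^{-1}(\sigma_0;\tau,\tau_0)\,P^{-1}(\sigma,\sigma_0;\tau)\,Q(\sigma;\tau,\tau_0)\,P(\sigma,\sigma_0;\tau_0)=T^{-1}(\sigma;\tau)\,Q(\sigma;\tau,\tau_0)\,P(\sigma,\sigma_0;\tau_0).$$ Then $$W=\prod_{\tau_0}^{\tau} e^{\,T^{-1}(\sigma;\tau')\,[A_0(\sigma;\tau')-L_\tau T(\sigma;\tau')]\,T(\sigma;\tau')\,d\tau'},$$ where $L_\tau T(\sigma;\tau')=\big(\partial_{\tau'}T(\sigma;\tau')\big)\,T^{-1}(\sigma;\tau')$.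
   Context: Product integral: for a continuous $B:[a,b]\to\mathbb{C}^{n\times n}$ and $x\in[a,b]$, $\prod_a^x e^{B(s)ds}$ is the limit, as the mesh of the partition $a=s_0<s_1<\dots<s_m=x$ tends to $0$, of the ordered product $e^{B(s_m)\Delta s_m}e^{B(s_{m-1})\Delta s_{m-1}}\cdots e^{B(s_1)\Delta s_1}$ with $\Delta s_k=s_k-s_{k-1}$ (later points to the left); equivalently it is the unique solution $F(x)$ of $F'(x)=B(x)F(x)$, $F(a)=I$. It is an invertible matrix, and $P^{-1},Q^{-1},T^{-1}$ denote matrix inverses. In $P(\sigma,\sigma_0;\tau)$ the ordering is in $\sigma'$ with $\tau$ a fixed parameter; in $Q(\sigma;\tau,\tau_0)$ the ordering is in $\tau'$ with $\sigma$ a fixed parameter. The operator $W$ is the holonomy (Wilson loop) around the boundary of the parameter rectangle $[\sigma_0,\sigma]\times[\tau_0,\tau]$. *)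

theory Defs
  imports "HOL-Analysis.Analysis"
begin

type_synonym 'n cmat = "complex ^ 'n ^ 'n"

definition prodint :: "(real \<Rightarrow> 'n::finite cmat) \<Rightarrow> real \<Rightarrow> real \<Rightarrow> 'n cmat" where
  "prodint B a x = (THE M. \<exists>F. F a = mat 1 \<and>
      (\<forall>t\<in>{a..x}. (F has_vector_derivative (B t ** F t)) (at t within {a..x})) \<and>
      F x = M)"

definition C1_on_rect :: "(real \<times> real \<Rightarrow> 'a::real_normed_vector) \<Rightarrow> (real \<times> real) set \<Rightarrow> bool" where
  "C1_on_rect f S \<longleftrightarrow> (\<exists>D1 D2. continuous_on S D1 \<and> continuous_on S D2 \<and>
      (\<forall>p\<in>S. (f has_derivative (\<lambda>(h,k). h *\<^sub>R D1 p + k *\<^sub>R D2 p)) (at p within S)))"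

end

theory Submission
  imports Defs
begin

(*
  Write T(t) = P(sigma, sigma0; t) Q(sigma0; t, tau0) and Q(t) = Q(sigma; t, tau0). Since Q' = A0 Q,
  the gauge-transformed matrix W(t) = T(t)^-1 Q(t) T(tau0) solves W' = T^-1 (A0 - T' T^-1) T W with
  W(tau0) = 1, and T(tau0) = P(sigma, sigma0; tau0); so W(tau) is the product integral of that
  coefficient. Product integrals are unique because a solution F of F' = B F and a solution G of the
  adjoint equation G' = - G B have a constant product G F; they exist by the Peano-Baker series.
  The analytic core is the differentiability of T, i.e. of P(sigma, sigma0; t) in the parameter t.
  Variation of constants gives
    P(s; t') - P(s; t) = P(s; t) * integral over [sigma0, s] of P(u; t)^-1 (A1(u, t') - A1(u, t)) P(u; t'),
  so P is uniformly continuous in t, and then the difference quotients of A1 converge uniformly to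
  the partial derivative, which can be passed through the integral.
*)

section \<open>Matrix algebra\<close>

lemma matrix_diff_ldistrib: "(A::'a::ring_1^'n^'m) ** (B - C) = A ** B - A ** C"
  by (simp add: matrix_matrix_mult_def vec_eq_iff algebra_simps sum_subtractf)

lemma matrix_diff_rdistrib: "((B::'a::ring_1^'n^'m) - C) ** A = B ** A - C ** A"
  by (simp add: matrix_matrix_mult_def vec_eq_iff algebra_simps sum_subtractf)

lemma matrix_add_rdistrib: "((B::'a::semiring_1^'n^'m) + C) ** A = B ** A + C ** A"
  by (simp add: matrix_matrix_mult_def vec_eq_iff algebra_simps sum.distrib)

lemma matrix_minus_left [simp]: "(- (B::'a::ring_1^'n^'m)) ** A = - (B ** A)"
  by (simp add: matrix_matrix_mult_def vec_eq_iff sum_negf)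

lemma matrix_minus_right [simp]: "(B::'a::ring_1^'n^'m) ** (- A) = - (B ** A)"
  by (simp add: matrix_matrix_mult_def vec_eq_iff sum_negf)

lemma matrix_scaleR_right: "(A::'a::real_algebra_1^'n^'m) ** (k *\<^sub>R B) = k *\<^sub>R (A ** B)"
  by (simp add: matrix_matrix_mult_def vec_eq_iff scaleR_sum_right)

lemma matrix_scaleR_left: "(k *\<^sub>R (A::'a::real_algebra_1^'n^'m)) ** B = k *\<^sub>R (A ** B)"
  by (simp add: scalar_matrix_assoc)

lemma bounded_bilinear_matrix_matrix_mult:
  "bounded_bilinear ((**) :: complex^'n^'m \<Rightarrow> complex^'p^'n \<Rightarrow> complex^'p^'m)"
  unfolding bilinear_conv_bounded_bilinear[symmetric] bilinear_def
  by (auto intro!: linearI simp: matrix_add_ldistrib matrix_add_rdistrib matrix_scaleR_left matrix_scaleR_right)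

lemma matrix_inv_eqI:
  fixes A B :: "'a::field^'n^'n"
  assumes "B ** A = mat 1"
  shows "matrix_inv A = B"
proof -
  have AB: "A ** B = mat 1"
    using assms matrix_left_right_inverse by blast
  have "A ** matrix_inv A = mat 1 \<and> matrix_inv A ** A = mat 1"
    unfolding matrix_inv_def by (rule someI_ex) (use AB assms in blast)
  then have "matrix_inv A = (B ** A) ** matrix_inv A"
    by (simp add: assms)
  also have "\<dots> = B"
    using \<open>A ** matrix_inv A = mat 1 \<and> _\<close> by (simp flip: matrix_mul_assoc)
  finally show ?thesis .
qed

lemma matrix_inv_left_right:
  fixes A :: "'a::field^'n^'n"
  assumes "invertible A"
  shows "matrix_inv A ** A = mat 1" and "A ** matrix_inv A = mat 1"
proof -
  obtain B where "B ** A = mat 1"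
    using assms invertible_left_inverse by blast
  then show "matrix_inv A ** A = mat 1" and "A ** matrix_inv A = mat 1"
    using matrix_inv_eqI matrix_left_right_inverse by metis+
qed

lemma matrix_inv_mult:
  fixes A B :: "'a::field^'n^'n"
  assumes "invertible A" "invertible B"
  shows "matrix_inv (A ** B) = matrix_inv B ** matrix_inv A"
proof (rule matrix_inv_eqI)
  have "matrix_inv B ** (matrix_inv A ** A) ** B = mat 1"
    using matrix_inv_left_right(1)[OF assms(1)] matrix_inv_left_right(1)[OF assms(2)] by simp
  then show "matrix_inv B ** matrix_inv A ** (A ** B) = mat 1"
    by (simp add: matrix_mul_assoc)
qed

lemma matrix_inverse_diff:
  fixes A A' B B' :: "'a::ring_1^'n^'n"
  assumes "A' ** A = mat 1" and "B ** B' = mat 1"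
  shows "A' - B' = - (A' ** (A - B) ** B')"
proof -
  have "A' ** (A - B) ** B' = (A' ** A) ** B' - A' ** (B ** B')"
    by (simp add: matrix_diff_ldistrib matrix_diff_rdistrib matrix_mul_assoc)
  then show ?thesis
    using assms by simp
qed

lemma matrix_mult_norm_bound:
  obtains K where "0 < K" "\<And>(x :: 'n::finite cmat) (y :: 'n cmat). norm (x ** y) \<le> norm x * norm y * K"
  using bounded_bilinear.pos_bounded[OF bounded_bilinear_matrix_matrix_mult] by blast

lemma bounded_bilinear_bounded_image:
  assumes "bounded_bilinear mul" and "bounded (f ` S)" "bounded (g ` S)"
  shows "bounded ((\<lambda>x. mul (f x) (g x)) ` S)"
proof -
  obtain K where K: "0 < K" "\<And>x y. norm (mul x y) \<le> norm x * norm y * K"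
    using bounded_bilinear.pos_bounded[OF assms(1)] by blast
  obtain Cf Cg where C: "\<forall>x\<in>S. norm (f x) \<le> Cf" "\<forall>x\<in>S. norm (g x) \<le> Cg"
    using assms(2,3) by (auto simp: bounded_iff)
  have "norm (mul (f x) (g x)) \<le> Cf * Cg * K" if "x \<in> S" for x
  proof -
    have "norm (f x) \<le> Cf" "norm (g x) \<le> Cg"
      using C that by auto
    then have "norm (f x) * norm (g x) * K \<le> Cf * Cg * K"
      using K(1) by (intro mult_right_mono mult_mono) (auto intro: order_trans[OF norm_ge_zero])
    then show ?thesis
      using K(2) order_trans by blast
  qed
  then show ?thesis
    unfolding bounded_iff by blast
qed

section \<open>Derivatives, uniform limits and sections\<close>

lemma has_vector_derivative_iff_difference_quotient:
  fixes f :: "real \<Rightarrow> 'a::real_normed_vector"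
  shows "(f has_vector_derivative f') (at x within S) \<longleftrightarrow>
    ((\<lambda>y. (f y - f x) /\<^sub>R (y - x)) \<longlongrightarrow> f') (at x within S)"
proof -
  have "norm ((1 / norm (y - x)) *\<^sub>R (f y - (f x + (y - x) *\<^sub>R f'))) =
      norm ((f y - f x) /\<^sub>R (y - x) - f')" if "y \<noteq> x" for y
  proof -
    have "(f y - f x) /\<^sub>R (y - x) - f' = (f y - (f x + (y - x) *\<^sub>R f')) /\<^sub>R (y - x)"
      using that by (simp add: scaleR_diff_right scaleR_add_right)
    then show ?thesis by (simp add: divide_inverse_commute)
  qed
  then have "((\<lambda>y. (1 / norm (y - x)) *\<^sub>R (f y - (f x + (y - x) *\<^sub>R f'))) \<longlongrightarrow> 0) (at x within S) \<longleftrightarrow>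
      ((\<lambda>y. (f y - f x) /\<^sub>R (y - x) - f') \<longlongrightarrow> 0) (at x within S)"
    by (subst (1 2) tendsto_norm_zero_iff[symmetric], intro tendsto_cong)
      (auto simp: eventually_at_filter)
  then show ?thesis
    by (simp add: has_vector_derivative_def has_derivative_within bounded_linear_scaleR_left
        flip: Lim_null)
qed

lemma has_vector_derivative_matrix_mult:
  fixes f :: "real \<Rightarrow> complex^'n^'m" and g :: "real \<Rightarrow> complex^'p^'n"
  assumes "(f has_vector_derivative f') (at x within S)" "(g has_vector_derivative g') (at x within S)"
  shows "((\<lambda>x. f x ** g x) has_vector_derivative f x ** g' + f' ** g x) (at x within S)"
  using bounded_bilinear.has_vector_derivative[OF bounded_bilinear_matrix_matrix_mult assms] .

lemma matrix_inverse_tendsto: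
  fixes X Y :: "real \<Rightarrow> 'n::finite cmat"
  assumes X: "(X \<longlongrightarrow> X t) (at t within S)" and t: "t \<in> S"
    and YX: "\<And>u. u \<in> S \<Longrightarrow> Y u ** X u = mat 1" and bounded: "bounded (Y ` S)"
  shows "(Y \<longlongrightarrow> Y t) (at t within S)"
proof -
  note mult = bounded_bilinear_matrix_matrix_mult
  have in_S: "\<forall>\<^sub>F u in at t within S. u \<in> S"
    by (simp add: eventually_at_filter)
  have XY: "X t ** Y t = mat 1"
    using YX[OF t] matrix_left_right_inverse by blast
  have Y_diff: "Y u - Y t = - (Y u ** (X u - X t) ** Y t)" if "u \<in> S" for u
    using matrix_inverse_diff[OF YX[OF that] XY] .
  obtain C where "\<forall>u\<in>S. norm (Y u) \<le> C"
    using bounded by (auto simp: bounded_iff)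
  then have "Bfun Y (at t within S)"
    using in_S by (intro BfunI) (auto elim: eventually_mono)
  moreover have "Zfun (\<lambda>u. X u - X t) (at t within S)"
    using X by (simp flip: tendsto_Zfun_iff)
  ultimately have "Zfun (\<lambda>u. Y u ** (X u - X t)) (at t within S)"
    by (rule bounded_bilinear.Bfun_prod_Zfun[OF mult])
  then have "((\<lambda>u. Y u ** (X u - X t) ** Y t) \<longlongrightarrow> 0) (at t within S)"
    by (intro bounded_bilinear.tendsto_left_zero[OF mult]) (simp add: tendsto_Zfun_iff)
  then have "((\<lambda>u. - (Y u ** (X u - X t) ** Y t)) \<longlongrightarrow> 0) (at t within S)"
    using tendsto_minus by fastforce
  then have "((\<lambda>u. Y u - Y t) \<longlongrightarrow> 0) (at t within S)"
    by (rule Lim_transform_eventually) (use in_S Y_diff in \<open>auto elim: eventually_mono\<close>)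
  then show ?thesis
    by (simp flip: Lim_null)
qed

lemma has_vector_derivative_matrix_inverse:
  fixes X Y :: "real \<Rightarrow> 'n::finite cmat"
  assumes X: "(X has_vector_derivative X') (at t within S)" and t: "t \<in> S"
    and YX: "\<And>u. u \<in> S \<Longrightarrow> Y u ** X u = mat 1" and bounded: "bounded (Y ` S)"
  shows "(Y has_vector_derivative - (Y t ** X' ** Y t)) (at t within S)"
proof -
  note mult = bounded_bilinear_matrix_matrix_mult
  have XY: "X t ** Y t = mat 1"
    using YX[OF t] matrix_left_right_inverse by blast
  have in_S: "\<forall>\<^sub>F u in at t within S. u \<in> S"
    by (simp add: eventually_at_filter)
  have "(X \<longlongrightarrow> X t) (at t within S)"
    using has_vector_derivative_continuous[OF X] by (simp add: continuous_within)
  then have "(Y \<longlongrightarrow> Y t) (at t within S)"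
    using t YX bounded by (rule matrix_inverse_tendsto)
  then have "((\<lambda>u. - (Y u ** ((X u - X t) /\<^sub>R (u - t)) ** Y t)) \<longlongrightarrow> - (Y t ** X' ** Y t)) (at t within S)"
    using X unfolding has_vector_derivative_iff_difference_quotient
    by (intro tendsto_minus bounded_bilinear.tendsto[OF mult] tendsto_const)
  moreover from in_S have "\<forall>\<^sub>F u in at t within S.
      - (Y u ** ((X u - X t) /\<^sub>R (u - t)) ** Y t) = (Y u - Y t) /\<^sub>R (u - t)"
  proof eventually_elim
    case (elim u)
    show ?case
      using matrix_inverse_diff[OF YX[OF elim] XY] by (simp add: matrix_scaleR_left matrix_scaleR_right)
  qed
  ultimately show ?thesis
    unfolding has_vector_derivative_iff_difference_quotient by (rule Lim_transform_eventually)
qed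

lemma uniform_limit_at_parameter:
  fixes f :: "'a::metric_space \<times> 'b::metric_space \<Rightarrow> 'c::metric_space"
  assumes f: "continuous_on (S \<times> T) f" and "compact S" "compact T" and t: "t \<in> T"
  shows "uniform_limit S (\<lambda>t' s. f (s, t')) (\<lambda>s. f (s, t)) (at t within T)"
proof (rule uniform_limitI)
  fix e :: real
  assume "e > 0"
  have "uniformly_continuous_on (S \<times> T) f"
    using f by (intro compact_uniformly_continuous compact_Times assms)
  then obtain \<delta> where "\<delta> > 0"
    and \<delta>: "\<And>x x'. x \<in> S \<times> T \<Longrightarrow> x' \<in> S \<times> T \<Longrightarrow> dist x' x < \<delta> \<Longrightarrow> dist (f x') (f x) < e"
    unfolding uniformly_continuous_on_def using \<open>e > 0\<close> by metis
  then show "\<forall>\<^sub>F t' in at t within T. \<forall>s\<in>S. dist (f (s, t')) (f (s, t)) < e"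
    unfolding eventually_at using t by (auto simp: dist_Pair_Pair intro!: exI[of _ \<delta>])
qed

lemma norm_difference_quotient_le:
  fixes f :: "real \<Rightarrow> 'a::real_normed_vector"
  assumes f': "\<And>r. r \<in> closed_segment t t' \<Longrightarrow> (f has_vector_derivative f' r) (at r within closed_segment t t')"
    and bound: "\<And>r. r \<in> closed_segment t t' \<Longrightarrow> norm (f' r - f' t) \<le> e" and "t' \<noteq> t"
  shows "norm ((f t' - f t) /\<^sub>R (t' - t) - f' t) \<le> e"
proof -
  have "norm (f t' - f t - (t' - t) *\<^sub>R f' t) \<le> norm (t' - t) * e"
    by (rule vector_differentiable_bound_linearization[where S = "closed_segment t t'"]) (use f' bound in auto)
  then have "norm (f t' - f t - (t' - t) *\<^sub>R f' t) / \<bar>t' - t\<bar> \<le> e"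
    using \<open>t' \<noteq> t\<close> by (simp add: divide_le_eq mult.commute)
  moreover have "(f t' - f t) /\<^sub>R (t' - t) - f' t = (f t' - f t - (t' - t) *\<^sub>R f' t) /\<^sub>R (t' - t)"
    using \<open>t' \<noteq> t\<close> by (simp add: scaleR_diff_right)
  ultimately show ?thesis
    by (simp add: divide_inverse_commute)
qed

lemma uniform_limit_difference_quotient:
  fixes B D :: "real \<times> real \<Rightarrow> 'a::real_normed_vector"
  assumes D: "continuous_on ({a..b} \<times> {c..d}) D"
    and B_D: "\<And>s t. s \<in> {a..b} \<Longrightarrow> t \<in> {c..d} \<Longrightarrow>
      ((\<lambda>t. B (s, t)) has_vector_derivative D (s, t)) (at t within {c..d})"
    and t: "t \<in> {c..d}"
  shows "uniform_limit {a..b} (\<lambda>t' s. (B (s, t') - B (s, t)) /\<^sub>R (t' - t)) (\<lambda>s. D (s, t))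
    (at t within {c..d})"
proof (rule uniform_limitI)
  fix e :: real
  assume "e > 0"
  have "\<forall>\<^sub>F r in at t within {c..d}. \<forall>s\<in>{a..b}. dist (D (s, r)) (D (s, t)) < e / 2"
    using uniform_limitD[OF uniform_limit_at_parameter[OF D compact_Icc compact_Icc t], of "e / 2"]
      \<open>e > 0\<close> by simp
  then obtain \<delta> where "\<delta> > 0"
    and "\<forall>r\<in>{c..d}. r \<noteq> t \<and> dist r t < \<delta> \<longrightarrow> (\<forall>s\<in>{a..b}. dist (D (s, r)) (D (s, t)) < e / 2)"
    unfolding eventually_at by blast
  then have \<delta>: "dist (D (s, r)) (D (s, t)) < e / 2"
    if "r \<in> {c..d}" "dist r t < \<delta>" "s \<in> {a..b}" for r s
    using that \<open>e > 0\<close> by (cases "r = t") auto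
  have quotient: "norm ((B (s, t') - B (s, t)) /\<^sub>R (t' - t) - D (s, t)) \<le> e / 2"
    if t': "t' \<in> {c..d}" "t' \<noteq> t" "dist t' t < \<delta>" and s: "s \<in> {a..b}" for t' s
  proof (rule norm_difference_quotient_le[where f = "\<lambda>r. B (s, r)"])
    have seg: "closed_segment t t' \<subseteq> {c..d}"
      using t t' by (intro closed_segment_subset) auto
    show "((\<lambda>r. B (s, r)) has_vector_derivative D (s, r)) (at r within closed_segment t t')"
      if "r \<in> closed_segment t t'" for r
      using B_D[OF s] seg that by (blast intro: has_vector_derivative_within_subset)
    show "norm (D (s, r) - D (s, t)) \<le> e / 2" if "r \<in> closed_segment t t'" for r
      using \<delta>[of r s] dist_in_closed_segment[OF that] seg that s \<open>dist t' t < \<delta>\<close>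
      by (force simp: dist_norm dist_commute)
  qed (use t' in simp)
  show "\<forall>\<^sub>F t' in at t within {c..d}. \<forall>s\<in>{a..b}.
      dist ((B (s, t') - B (s, t)) /\<^sub>R (t' - t)) (D (s, t)) < e"
    unfolding eventually_at
  proof (intro exI[of _ \<delta>] conjI ballI impI \<open>\<delta> > 0\<close>)
    fix t' s
    assume "t' \<in> {c..d}" "t' \<noteq> t \<and> dist t' t < \<delta>" "s \<in> {a..b}"
    then show "dist ((B (s, t') - B (s, t)) /\<^sub>R (t' - t)) (D (s, t)) < e"
      using quotient[of t' s] \<open>e > 0\<close> by (simp add: dist_norm)
  qed
qed

lemma continuous_on_section_fst:
  assumes "continuous_on (S \<times> T) f" "t \<in> T"
  shows "continuous_on S (\<lambda>s. f (s, t))"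
  by (rule continuous_on_compose2[OF assms(1)]) (use assms(2) in \<open>auto intro!: continuous_intros\<close>)

lemma continuous_on_section_snd:
  assumes "continuous_on (S \<times> T) f" "s \<in> S"
  shows "continuous_on T (\<lambda>t. f (s, t))"
  by (rule continuous_on_compose2[OF assms(1)]) (use assms(2) in \<open>auto intro!: continuous_intros\<close>)

lemma C1_on_rect_imp_continuous_on: "C1_on_rect f S \<Longrightarrow> continuous_on S f"
  unfolding C1_on_rect_def continuous_on_eq_continuous_within
  using has_derivative_continuous by blast

lemma C1_on_rect_partial_derivative_snd:
  fixes f :: "real \<times> real \<Rightarrow> 'a::real_normed_vector"
  assumes "C1_on_rect f (S \<times> T)"
  obtains D where "continuous_on (S \<times> T) D"
    and "\<And>s t. s \<in> S \<Longrightarrow> t \<in> T \<Longrightarrow> ((\<lambda>t. f (s, t)) has_vector_derivative D (s, t)) (at t within T)"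
proof -
  obtain D1 D2 where "continuous_on (S \<times> T) D2"
    and f': "\<And>p. p \<in> S \<times> T \<Longrightarrow> (f has_derivative (\<lambda>(h, k). h *\<^sub>R D1 p + k *\<^sub>R D2 p)) (at p within S \<times> T)"
    using assms unfolding C1_on_rect_def by blast
  moreover have "((\<lambda>t. f (s, t)) has_vector_derivative D2 (s, t)) (at t within T)"
    if "s \<in> S" "t \<in> T" for s t
  proof -
    have "((\<lambda>t. (s, t)) has_derivative (\<lambda>k. (0, k))) (at t within T)"
      by (auto intro!: derivative_eq_intros)
    then have "((\<lambda>t. f (s, t)) has_derivative (\<lambda>k. k *\<^sub>R D2 (s, t))) (at t within T)"
      using has_derivative_in_compose2[OF f', of "\<lambda>t. (s, t)" T t "\<lambda>k. (0, k)"] that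
      by (auto simp: image_subset_iff)
    then show ?thesis
      by (simp add: has_vector_derivative_def)
  qed
  ultimately show ?thesis
    using that by blast
qed

lemma bounded_bilinear_uniform_limit_null:
  assumes mul: "bounded_bilinear mul" and f: "uniform_limit S f (\<lambda>_. 0) F"
    and g: "\<forall>\<^sub>F n in F. \<forall>x\<in>S. norm (g n x) \<le> C"
  shows "uniform_limit S (\<lambda>n x. mul (f n x) (g n x)) (\<lambda>_. 0) F"
proof -
  obtain K where K: "0 < K" "\<And>x y. norm (mul x y) \<le> norm x * norm y * K"
    using bounded_bilinear.pos_bounded[OF mul] by blast
  have "uniform_limit S (\<lambda>n x. norm (f n x) * (\<bar>C\<bar> * K)) (\<lambda>_. 0) F"
    using bounded_linear.uniform_limit[OF bounded_linear_mult_left uniform_limit_norm[OF f]] by simp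
  moreover from g have "\<forall>\<^sub>F n in F. \<forall>x\<in>S. norm (mul (f n x) (g n x)) \<le> norm (f n x) * (\<bar>C\<bar> * K)"
  proof eventually_elim
    case (elim n)
    show ?case
    proof
      fix x
      assume "x \<in> S"
      have "norm (mul (f n x) (g n x)) \<le> norm (f n x) * norm (g n x) * K"
        by (rule K(2))
      also have "\<dots> \<le> norm (f n x) * \<bar>C\<bar> * K"
        using elim \<open>x \<in> S\<close> K(1) by (intro mult_right_mono mult_left_mono) auto
      finally show "norm (mul (f n x) (g n x)) \<le> norm (f n x) * (\<bar>C\<bar> * K)"
        by (simp add: mult_ac)
    qed
  qed
  ultimately show ?thesis
    by (rule uniform_limit_null_comparison[rotated])
qed

lemma uniform_limit_indefinite_integral:
  fixes f :: "'i \<Rightarrow> real \<Rightarrow> 'a::banach"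
  assumes lim: "uniform_limit {a..b} f g F"
    and cont: "\<forall>\<^sub>F n in F. continuous_on {a..b} (f n)" and "continuous_on {a..b} g"
  shows "uniform_limit {a..b} (\<lambda>n s. integral {a..s} (f n)) (\<lambda>s. integral {a..s} g) F"
proof (rule uniform_limitI)
  fix e :: real
  assume "e > 0"
  define e' where "e' = e / (\<bar>b - a\<bar> + 1)"
  have "e' > 0"
    using \<open>e > 0\<close> by (simp add: e'_def)
  with lim have "\<forall>\<^sub>F n in F. \<forall>x\<in>{a..b}. dist (f n x) (g x) < e'"
    by (rule uniform_limitD)
  with cont show "\<forall>\<^sub>F n in F. \<forall>s\<in>{a..b}. dist (integral {a..s} (f n)) (integral {a..s} g) < e"
  proof eventually_elim
    case (elim n)
    show ?case
    proof
      fix s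
      assume s: "s \<in> {a..b}"
      have sub: "{a..s} \<subseteq> {a..b}"
        using s by auto
      have "((\<lambda>x. f n x - g x) has_integral (integral {a..s} (f n) - integral {a..s} g)) {a..s}"
        using elim(1) \<open>continuous_on {a..b} g\<close>
        by (intro has_integral_diff integrable_integral integrable_continuous_real
            continuous_on_subset[OF _ sub])
      then have "norm (integral {a..s} (f n) - integral {a..s} g) \<le> e' * (s - a)"
        using has_integral_bound[of e' "\<lambda>x. f n x - g x" _ a s] elim(2) sub s \<open>e' > 0\<close>
        by (force simp: dist_norm less_imp_le)
      also have "\<dots> \<le> e' * \<bar>b - a\<bar>"
        using s \<open>e' > 0\<close> by (intro mult_left_mono) auto
      also have "\<dots> < e"
        using \<open>e > 0\<close> by (simp add: e'_def field_simps)
      finally show "dist (integral {a..s} (f n)) (integral {a..s} g) < e"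
        by (simp add: dist_norm)
    qed
  qed
qed

section \<open>Linear equations and the Peano--Baker series\<close>

lemma has_integral_power_div_fact:
  fixes a s c :: real
  assumes "a \<le> s"
  shows "((\<lambda>u. c * (u - a) ^ k / fact k) has_integral c * (s - a) ^ Suc k / fact (Suc k)) {a..s}"
proof -
  have "((\<lambda>u. c * (u - a) ^ Suc k / fact (Suc k)) has_real_derivative c * (x - a) ^ k / fact k)
      (at x within {a..s})" for x
  proof -
    have "((\<lambda>u. c * (u - a) ^ Suc k / fact (Suc k)) has_real_derivative
        c * (real (Suc k) * (x - a) ^ k) / fact (Suc k)) (at x within {a..s})"
      by (rule derivative_eq_intros refl | simp)+
    moreover have "c * (real (Suc k) * (x - a) ^ k) / fact (Suc k) = c * (x - a) ^ k / fact k"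
      by (simp add: field_simps del: of_nat_Suc)
    ultimately show ?thesis
      by (simp only:)
  qed
  then show ?thesis
    using fundamental_theorem_of_calculus[OF assms, of "\<lambda>u. c * (u - a) ^ Suc k / fact (Suc k)"]
    by (simp add: has_real_derivative_iff_has_vector_derivative)
qed

primrec peano_baker_term ::
  "('m \<Rightarrow> 'x \<Rightarrow> 'x::real_normed_vector) \<Rightarrow> (real \<Rightarrow> 'm) \<Rightarrow> real \<Rightarrow> 'x \<Rightarrow> nat \<Rightarrow> real \<Rightarrow> 'x" where
  "peano_baker_term mul B a x0 0 = (\<lambda>s. x0)"
| "peano_baker_term mul B a x0 (Suc k) =
     (\<lambda>s. integral {a..s} (\<lambda>u. mul (B u) (peano_baker_term mul B a x0 k u)))"

context
  fixes mul :: "'m::real_normed_vector \<Rightarrow> 'x::banach \<Rightarrow> 'x" and B :: "real \<Rightarrow> 'm"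
    and K M a b :: real
  assumes mul: "bounded_bilinear mul" and mul_bound: "\<And>x y. norm (mul x y) \<le> norm x * norm y * K"
    and K: "0 \<le> K" and B: "continuous_on {a..b} B" and M: "\<And>u. u \<in> {a..b} \<Longrightarrow> norm (B u) \<le> M"
begin

lemma peano_baker_term_continuous_bound:
  "continuous_on {a..b} (peano_baker_term mul B a x0 k) \<and>
   (\<forall>s\<in>{a..b}. norm (peano_baker_term mul B a x0 k s) \<le> norm x0 * (K * M) ^ k * (s - a) ^ k / fact k)"
proof (induction k)
  case 0
  then show ?case by auto
next
  case (Suc k)
  let ?p = "peano_baker_term mul B a x0 k"
  have integrand: "continuous_on {a..b} (\<lambda>u. mul (B u) (?p u))"
    using Suc.IH B by (intro bounded_bilinear.continuous_on[OF mul]) auto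
  have "norm (peano_baker_term mul B a x0 (Suc k) s) \<le> norm x0 * (K * M) ^ Suc k * (s - a) ^ Suc k / fact (Suc k)"
    if s: "s \<in> {a..b}" for s
  proof -
    let ?c = "norm x0 * (K * M) ^ Suc k"
    have sub: "{a..s} \<subseteq> {a..b}"
      using s by auto
    have poly: "((\<lambda>u. ?c * (u - a) ^ k / fact k) has_integral ?c * (s - a) ^ Suc k / fact (Suc k)) {a..s}"
      using s by (intro has_integral_power_div_fact) simp
    have "norm (integral {a..s} (\<lambda>u. mul (B u) (?p u))) \<le> integral {a..s} (\<lambda>u. ?c * (u - a) ^ k / fact k)"
    proof (rule integral_norm_bound_integral)
      show "(\<lambda>u. mul (B u) (?p u)) integrable_on {a..s}"
        by (rule integrable_continuous_real, rule continuous_on_subset[OF integrand sub])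
      show "(\<lambda>u. ?c * (u - a) ^ k / fact k) integrable_on {a..s}"
        using poly by blast
      fix u
      assume "u \<in> {a..s}"
      then have u: "u \<in> {a..b}"
        using sub by auto
      have "norm (mul (B u) (?p u)) \<le> norm (B u) * norm (?p u) * K"
        by (rule mul_bound)
      also have "\<dots> \<le> M * (norm x0 * (K * M) ^ k * (u - a) ^ k / fact k) * K"
        using Suc.IH u M[OF u] K order_trans[OF norm_ge_zero M[OF u]] by (intro mult_right_mono mult_mono) auto
      also have "\<dots> = ?c * (u - a) ^ k / fact k"
        by (simp add: field_simps)
      finally show "norm (mul (B u) (?p u)) \<le> ?c * (u - a) ^ k / fact k" .
    qed
    also have "\<dots> = ?c * (s - a) ^ Suc k / fact (Suc k)"
      using poly by (rule integral_unique)
    finally show ?thesis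
      by simp
  qed
  moreover have "continuous_on {a..b} (peano_baker_term mul B a x0 (Suc k))"
    using integral_has_vector_derivative[OF integrand] has_vector_derivative_continuous
    by (fastforce simp: continuous_on_eq_continuous_within)
  ultimately show ?case
    by blast
qed

lemma peano_baker_series_uniform_limit:
  assumes "a \<le> b"
  shows "uniform_limit {a..b} (\<lambda>n s. \<Sum>i<n. peano_baker_term mul B a x0 i s)
      (\<lambda>s. \<Sum>i. peano_baker_term mul B a x0 i s) sequentially"
    and "\<And>s. s \<in> {a..b} \<Longrightarrow> norm (\<Sum>i. peano_baker_term mul B a x0 i s) \<le> norm x0 * exp (K * M * (b - a))"
proof -
  let ?p = "peano_baker_term mul B a x0"
  define c where "c i = norm x0 * ((K * M * (b - a)) ^ i /\<^sub>R fact i)" for i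
  have "0 \<le> M"
    using M[of a] \<open>a \<le> b\<close> by (auto intro: order_trans[OF norm_ge_zero])
  have p_bound: "norm (?p i s) \<le> c i" if s: "s \<in> {a..b}" for i s
  proof -
    have "norm (?p i s) \<le> norm x0 * (K * M) ^ i * (s - a) ^ i / fact i"
      using peano_baker_term_continuous_bound s by blast
    also have "\<dots> = norm x0 * (K * M * (s - a)) ^ i / fact i"
      by (simp add: power_mult_distrib)
    also have "\<dots> \<le> norm x0 * (K * M * (b - a)) ^ i / fact i"
      using s K \<open>0 \<le> M\<close> by (intro divide_right_mono mult_left_mono power_mono) auto
    finally show ?thesis
      by (simp add: c_def divide_inverse mult_ac)
  qed
  have c_sums: "c sums (norm x0 * exp (K * M * (b - a)))"
    unfolding c_def by (intro sums_mult exp_converges)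
  show "uniform_limit {a..b} (\<lambda>n s. \<Sum>i<n. ?p i s) (\<lambda>s. \<Sum>i. ?p i s) sequentially"
    using p_bound c_sums by (intro Weierstrass_m_test) (auto simp: sums_summable)
  show "norm (\<Sum>i. ?p i s) \<le> norm x0 * exp (K * M * (b - a))" if "s \<in> {a..b}" for s
  proof -
    have "norm (\<Sum>i. ?p i s) \<le> suminf c"
      using p_bound[OF that] c_sums by (intro norm_suminf_le) (auto simp: sums_summable)
    also have "\<dots> = norm x0 * exp (K * M * (b - a))"
      using c_sums by (simp add: sums_iff)
    finally show ?thesis .
  qed
qed

lemma continuous_on_peano_baker_series:
  assumes "a \<le> b"
  shows "continuous_on {a..b} (\<lambda>s. \<Sum>i. peano_baker_term mul B a x0 i s)"
  using peano_baker_term_continuous_bound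
  by (intro uniform_limit_theorem[OF _ peano_baker_series_uniform_limit(1)[OF assms]] always_eventually
      continuous_on_sum allI) auto

lemma peano_baker_series_integral_equation:
  assumes "a \<le> b" and s: "s \<in> {a..b}"
  shows "(\<Sum>i. peano_baker_term mul B a x0 i s) =
    x0 + integral {a..s} (\<lambda>u. mul (B u) (\<Sum>i. peano_baker_term mul B a x0 i u))"
proof -
  let ?p = "peano_baker_term mul B a x0"
  define S where "S n s = (\<Sum>i<n. ?p i s)" for n s
  define F where "F s = (\<Sum>i. ?p i s)" for s
  have S_lim: "uniform_limit {a..b} S F sequentially"
    unfolding S_def[abs_def] F_def using peano_baker_series_uniform_limit(1)[OF \<open>a \<le> b\<close>] .
  have S_cont: "continuous_on {a..b} (S n)" for n
    unfolding S_def using peano_baker_term_continuous_bound by (intro continuous_on_sum) blast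
  have F_cont: "continuous_on {a..b} F"
    unfolding F_def using continuous_on_peano_baker_series[OF \<open>a \<le> b\<close>] .
  have integrand_cont: "continuous_on {a..b} (\<lambda>u. mul (B u) (f u))" if "continuous_on {a..b} f" for f
    using that B by (rule bounded_bilinear.continuous_on[OF mul, rotated])
  have S_Suc: "S (Suc n) s = x0 + integral {a..s} (\<lambda>u. mul (B u) (S n u))" for n
  proof -
    have "(\<Sum>i<n. ?p (Suc i) s) = integral {a..s} (\<lambda>u. \<Sum>i<n. mul (B u) (?p i u))"
      using s peano_baker_term_continuous_bound
      by (auto intro!: integral_sum[symmetric] integrable_continuous_real continuous_on_subset[OF integrand_cont])
    then show ?thesis
      unfolding S_def sum.lessThan_Suc_shift by (simp add: bounded_bilinear.sum_right[OF mul])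
  qed
  have "bounded (F ` {a..b})" "bounded (B ` {a..b})"
    using F_cont B by (auto intro!: compact_imp_bounded compact_continuous_image)
  then have "uniform_limit {a..b} (\<lambda>n u. mul (B u) (S n u)) (\<lambda>u. mul (B u) (F u)) sequentially"
    by (intro bounded_bilinear.bounded_uniform_limit[OF mul] uniform_limit_const S_lim)
  then have "uniform_limit {a..b} (\<lambda>n s. integral {a..s} (\<lambda>u. mul (B u) (S n u)))
      (\<lambda>s. integral {a..s} (\<lambda>u. mul (B u) (F u))) sequentially"
    by (intro uniform_limit_indefinite_integral integrand_cont S_cont F_cont always_eventually allI)
  then have "(\<lambda>n. S (Suc n) s) \<longlonglongrightarrow> x0 + integral {a..s} (\<lambda>u. mul (B u) (F u))"
    unfolding S_Suc by (intro tendsto_add tendsto_const tendsto_uniform_limitI[OF _ s])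
  moreover have "(\<lambda>n. S (Suc n) s) \<longlonglongrightarrow> F s"
    by (rule LIMSEQ_Suc[OF tendsto_uniform_limitI[OF S_lim s]])
  ultimately show ?thesis
    unfolding F_def using LIMSEQ_unique by blast
qed

lemma linear_ode_solution_exists:
  assumes "a \<le> b"
  obtains F where "F a = x0"
    and "\<And>t. t \<in> {a..b} \<Longrightarrow> (F has_vector_derivative mul (B t) (F t)) (at t within {a..b})"
    and "\<And>t. t \<in> {a..b} \<Longrightarrow> norm (F t) \<le> norm x0 * exp (K * M * (b - a))"
proof -
  define F where "F s = (\<Sum>i. peano_baker_term mul B a x0 i s)" for s
  note F_integral = peano_baker_series_integral_equation[OF \<open>a \<le> b\<close>, of _ x0, folded F_def]
  have "continuous_on {a..b} (\<lambda>u. mul (B u) (F u))"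
    unfolding F_def using continuous_on_peano_baker_series[OF \<open>a \<le> b\<close>] B
    by (intro bounded_bilinear.continuous_on[OF mul])
  then have integral_derivative: "((\<lambda>s. x0 + integral {a..s} (\<lambda>u. mul (B u) (F u))) has_vector_derivative
      mul (B t) (F t)) (at t within {a..b})" if "t \<in> {a..b}" for t
    using integral_has_vector_derivative that by (auto intro!: derivative_eq_intros)
  have "(F has_vector_derivative mul (B t) (F t)) (at t within {a..b})" if "t \<in> {a..b}" for t
    using has_vector_derivative_transform[OF that F_integral integral_derivative[OF that]] .
  moreover have "F a = x0"
    using F_integral[of a] \<open>a \<le> b\<close> by simp
  moreover have "norm (F t) \<le> norm x0 * exp (K * M * (b - a))" if "t \<in> {a..b}" for t
    unfolding F_def using peano_baker_series_uniform_limit(2)[OF \<open>a \<le> b\<close> that] .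
  ultimately show ?thesis
    using that by blast
qed

end

section \<open>Product integrals\<close>

definition solves_lin_ode :: "(real \<Rightarrow> 'n::finite cmat) \<Rightarrow> real \<Rightarrow> real \<Rightarrow> (real \<Rightarrow> 'n cmat) \<Rightarrow> bool" where
  "solves_lin_ode B a b F \<longleftrightarrow>
     (\<forall>t\<in>{a..b}. (F has_vector_derivative B t ** F t) (at t within {a..b}))"

definition solves_adjoint_ode :: "(real \<Rightarrow> 'n::finite cmat) \<Rightarrow> real \<Rightarrow> real \<Rightarrow> (real \<Rightarrow> 'n cmat) \<Rightarrow> bool" where
  "solves_adjoint_ode B a b G \<longleftrightarrow>
     (\<forall>t\<in>{a..b}. (G has_vector_derivative - (G t ** B t)) (at t within {a..b}))"

lemma solves_lin_ode_subset:
  assumes "solves_lin_ode B a b F" "b' \<le> b"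
  shows "solves_lin_ode B a b' F"
  using assms unfolding solves_lin_ode_def
  by (metis atLeastAtMost_iff atLeastatMost_subset_iff has_vector_derivative_within_subset order_refl order_trans)

lemma solves_adjoint_ode_subset:
  assumes "solves_adjoint_ode B a b G" "b' \<le> b"
  shows "solves_adjoint_ode B a b' G"
  using assms unfolding solves_adjoint_ode_def
  by (metis atLeastAtMost_iff atLeastatMost_subset_iff has_vector_derivative_within_subset order_refl order_trans)

lemma solves_lin_ode_continuous_on: "solves_lin_ode B a b F \<Longrightarrow> continuous_on {a..b} F"
  unfolding solves_lin_ode_def continuous_on_eq_continuous_within
  using has_vector_derivative_continuous by blast

lemma solves_adjoint_ode_continuous_on: "solves_adjoint_ode B a b G \<Longrightarrow> continuous_on {a..b} G"
  unfolding solves_adjoint_ode_def continuous_on_eq_continuous_within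
  using has_vector_derivative_continuous by blast

lemma adjoint_mult_solution_has_integral:
  assumes F: "solves_lin_ode B' a b F" and G: "solves_adjoint_ode B a b G" and s: "s \<in> {a..b}"
  shows "((\<lambda>u. G u ** (B' u - B u) ** F u) has_integral G s ** F s - G a ** F a) {a..s}"
proof (rule fundamental_theorem_of_calculus)
  show "a \<le> s"
    using s by simp
  fix u
  assume "u \<in> {a..s}"
  moreover have "solves_lin_ode B' a s F" "solves_adjoint_ode B a s G"
    using s solves_lin_ode_subset[OF F] solves_adjoint_ode_subset[OF G] by auto
  ultimately have "((\<lambda>u. G u ** F u) has_vector_derivative G u ** (B' u ** F u) + (- (G u ** B u)) ** F u)
      (at u within {a..s})"
    unfolding solves_lin_ode_def solves_adjoint_ode_def by (intro has_vector_derivative_matrix_mult) auto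
  then show "((\<lambda>u. G u ** F u) has_vector_derivative G u ** (B' u - B u) ** F u) (at u within {a..s})"
    by (simp add: matrix_diff_ldistrib matrix_diff_rdistrib matrix_mul_assoc)
qed

lemma adjoint_mult_solution_const:
  assumes "solves_lin_ode B a b F" "solves_adjoint_ode B a b G" "s \<in> {a..b}"
  shows "G s ** F s = G a ** F a"
  using adjoint_mult_solution_has_integral[OF assms] by simp

lemma fundamental_solutions_exist:
  fixes B :: "real \<Rightarrow> 'n::finite cmat"
  assumes mult_bound: "\<And>(x :: 'n cmat) (y :: 'n cmat). norm (x ** y) \<le> norm x * norm y * K" and "0 \<le> K"
    and "a \<le> b" and B: "continuous_on {a..b} B" and M: "\<And>u. u \<in> {a..b} \<Longrightarrow> norm (B u) \<le> M"
  obtains F G where "F a = mat 1" "G a = mat 1" "solves_lin_ode B a b F" "solves_adjoint_ode B a b G"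
    and "\<And>t. t \<in> {a..b} \<Longrightarrow> norm (F t) \<le> norm (mat 1 :: 'n cmat) * exp (K * M * (b - a))"
    and "\<And>t. t \<in> {a..b} \<Longrightarrow> norm (G t) \<le> norm (mat 1 :: 'n cmat) * exp (K * M * (b - a))"
proof -
  note mult = bounded_bilinear_matrix_matrix_mult
  obtain F where "F a = mat 1" "solves_lin_ode B a b F"
    and "\<And>t. t \<in> {a..b} \<Longrightarrow> norm (F t) \<le> norm (mat 1 :: 'n cmat) * exp (K * M * (b - a))"
    using linear_ode_solution_exists[OF mult mult_bound \<open>0 \<le> K\<close> B M \<open>a \<le> b\<close>]
    unfolding solves_lin_ode_def by metis
  moreover obtain G where "G a = mat 1" "solves_adjoint_ode B a b G"
    and "\<And>t. t \<in> {a..b} \<Longrightarrow> norm (G t) \<le> norm (mat 1 :: 'n cmat) * exp (K * M * (b - a))"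
  proof -
    have flip_bound: "norm (y ** x) \<le> norm x * norm y * K" for x y :: "'n cmat"
      using mult_bound[of y x] by (simp add: mult_ac)
    have "continuous_on {a..b} (\<lambda>t. - B t)"
      using B by (intro continuous_intros)
    moreover have "norm (- B u) \<le> M" if "u \<in> {a..b}" for u
      using M[OF that] by simp
    ultimately obtain G where "G a = mat 1"
      and "\<And>t. t \<in> {a..b} \<Longrightarrow> (G has_vector_derivative G t ** - B t) (at t within {a..b})"
      and "\<And>t. t \<in> {a..b} \<Longrightarrow> norm (G t) \<le> norm (mat 1 :: 'n cmat) * exp (K * M * (b - a))"
      using linear_ode_solution_exists[OF bounded_bilinear.flip[OF mult] flip_bound \<open>0 \<le> K\<close>]
        \<open>a \<le> b\<close> by blast
    then show ?thesis
      using that unfolding solves_adjoint_ode_def by simp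
  qed
  ultimately show ?thesis
    using that by blast
qed

lemma prodint_eqI:
  assumes F: "F a = mat 1" "solves_lin_ode B a b F" and G: "G a = mat 1" "solves_adjoint_ode B a b G"
    and t: "t \<in> {a..b}"
  shows "prodint B a t = F t" and "matrix_inv (prodint B a t) = G t"
proof -
  have GF: "G s ** F s = mat 1" if "s \<in> {a..b}" for s
    using adjoint_mult_solution_const[OF F(2) G(2) that] F(1) G(1) by simp
  have "prodint B a t = F t"
    unfolding prodint_def
  proof (rule the_equality)
    show "\<exists>F'. F' a = mat 1 \<and> (\<forall>s\<in>{a..t}. (F' has_vector_derivative B s ** F' s) (at s within {a..t}))
        \<and> F' t = F t"
      using F solves_lin_ode_subset[OF F(2)] t by (auto simp: solves_lin_ode_def)
  next
    fix M
    assume "\<exists>F'. F' a = mat 1 \<and> (\<forall>s\<in>{a..t}. (F' has_vector_derivative B s ** F' s) (at s within {a..t}))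
        \<and> F' t = M"
    then obtain F' where F': "F' a = mat 1" "solves_lin_ode B a t F'" "F' t = M"
      by (auto simp: solves_lin_ode_def)
    have "G t ** F' t = mat 1"
      using adjoint_mult_solution_const[OF F'(2) solves_adjoint_ode_subset[OF G(2)], of t] F'(1) G(1) t
      by simp
    then have "matrix_inv (G t) = F' t"
      by (simp add: matrix_inv_eqI matrix_left_right_inverse)
    moreover have "matrix_inv (G t) = F t"
      using GF[OF t] by (simp add: matrix_inv_eqI matrix_left_right_inverse)
    ultimately show "M = F t"
      using F'(3) by simp
  qed
  then show "prodint B a t = F t" and "matrix_inv (prodint B a t) = G t"
    using matrix_inv_eqI GF[OF t] by auto
qed

lemma prodint_refl: "prodint B a a = mat 1"
  unfolding prodint_def
proof (rule the_equality)
  show "\<exists>F. F a = mat 1 \<and> (\<forall>t\<in>{a..a}. (F has_vector_derivative B t ** F t) (at t within {a..a}))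
      \<and> F a = mat 1"
    by (rule exI[of _ "\<lambda>_. mat 1"])
      (simp add: has_vector_derivative_def has_derivative_within_singleton_iff bounded_linear_scaleR_left)
qed auto

lemma norm_prodint_le:
  fixes B :: "real \<Rightarrow> 'n::finite cmat"
  assumes "\<And>(x :: 'n cmat) (y :: 'n cmat). norm (x ** y) \<le> norm x * norm y * K" "0 \<le> K"
    and "continuous_on {a..b} B" "\<And>u. u \<in> {a..b} \<Longrightarrow> norm (B u) \<le> M" and t: "t \<in> {a..b}"
  shows "norm (prodint B a t) \<le> norm (mat 1 :: 'n cmat) * exp (K * M * (b - a))"
    and "norm (matrix_inv (prodint B a t)) \<le> norm (mat 1 :: 'n cmat) * exp (K * M * (b - a))"
proof -
  have "a \<le> b"
    using t by simp
  obtain F G where "F a = mat 1" "G a = mat 1" "solves_lin_ode B a b F" "solves_adjoint_ode B a b G"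
    and F_bound: "\<And>t. t \<in> {a..b} \<Longrightarrow> norm (F t) \<le> norm (mat 1 :: 'n cmat) * exp (K * M * (b - a))"
    and G_bound: "\<And>t. t \<in> {a..b} \<Longrightarrow> norm (G t) \<le> norm (mat 1 :: 'n cmat) * exp (K * M * (b - a))"
    using fundamental_solutions_exist[OF assms(1,2) \<open>a \<le> b\<close> assms(3,4)] by blast
  then have "prodint B a t = F t" "matrix_inv (prodint B a t) = G t"
    using prodint_eqI t by blast+
  then show "norm (prodint B a t) \<le> norm (mat 1 :: 'n cmat) * exp (K * M * (b - a))"
    and "norm (matrix_inv (prodint B a t)) \<le> norm (mat 1 :: 'n cmat) * exp (K * M * (b - a))"
    using F_bound[OF t] G_bound[OF t] by simp_all
qed

lemma prodint_fundamental:
  fixes B :: "real \<Rightarrow> 'n::finite cmat"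
  assumes "a \<le> b" and B: "continuous_on {a..b} B"
  shows "solves_lin_ode B a b (prodint B a)"
    and "solves_adjoint_ode B a b (\<lambda>t. matrix_inv (prodint B a t))"
    and "\<And>t. t \<in> {a..b} \<Longrightarrow> matrix_inv (prodint B a t) ** prodint B a t = mat 1"
proof -
  obtain K where K: "0 < K" "\<And>(x :: 'n cmat) (y :: 'n cmat). norm (x ** y) \<le> norm x * norm y * K"
    using matrix_mult_norm_bound by blast
  obtain M where M: "\<forall>u\<in>{a..b}. norm (B u) \<le> M"
    using compact_imp_bounded[OF compact_continuous_image[OF B]] by (auto simp: bounded_iff)
  obtain F G where F: "F a = mat 1" "solves_lin_ode B a b F"
    and G: "G a = mat 1" "solves_adjoint_ode B a b G"
    using fundamental_solutions_exist[OF K(2) less_imp_le[OF K(1)] \<open>a \<le> b\<close> B M[rule_format]] by metis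
  have eq: "prodint B a t = F t" "matrix_inv (prodint B a t) = G t" if "t \<in> {a..b}" for t
    using prodint_eqI[OF F G that] by auto
  show "solves_lin_ode B a b (prodint B a)"
    using F(2) eq(1) unfolding solves_lin_ode_def
    by (auto intro: has_vector_derivative_transform)
  show "solves_adjoint_ode B a b (\<lambda>t. matrix_inv (prodint B a t))"
    using G(2) eq(2) unfolding solves_adjoint_ode_def
    by (auto intro: has_vector_derivative_transform)
  show "matrix_inv (prodint B a t) ** prodint B a t = mat 1" if "t \<in> {a..b}" for t
    using adjoint_mult_solution_const[OF F(2) G(2) that] F(1) G(1) eq[OF that] by simp
qed

lemma continuous_on_prodint:
  fixes B :: "real \<Rightarrow> 'n::finite cmat"
  assumes "a \<le> b" and "continuous_on {a..b} B"
  shows "continuous_on {a..b} (prodint B a)"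
    and "continuous_on {a..b} (\<lambda>t. matrix_inv (prodint B a t))"
  using prodint_fundamental[OF assms] solves_lin_ode_continuous_on solves_adjoint_ode_continuous_on
  by blast+

lemma invertible_prodint:
  fixes B :: "real \<Rightarrow> 'n::finite cmat"
  assumes "a \<le> b" "continuous_on {a..b} B" "t \<in> {a..b}"
  shows "invertible (prodint B a t)"
  using prodint_fundamental(3)[OF assms] invertible_left_inverse by blast

section \<open>Gauge transformations\<close>

text \<open>The bound on the inverse is what makes \<open>\<lambda>t. matrix_inv (T t)\<close> differentiable.\<close>

definition regular_frame :: "real set \<Rightarrow> (real \<Rightarrow> 'n::finite cmat) \<Rightarrow> bool" where
  "regular_frame S T \<longleftrightarrow>
     (\<forall>t\<in>S. T differentiable at t within S \<and> invertible (T t)) \<and>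
     bounded ((\<lambda>t. matrix_inv (T t)) ` S)"

text \<open>On a
  degenerate interval the derivative is a junk value, which is harmless: there every function is a
  solution.\<close>

definition gauge_transform ::
  "real set \<Rightarrow> (real \<Rightarrow> 'n::finite cmat) \<Rightarrow> (real \<Rightarrow> 'n cmat) \<Rightarrow> real \<Rightarrow> 'n cmat" where
  "gauge_transform S T A t =
     matrix_inv (T t) ** (A t - vector_derivative T (at t within S) ** matrix_inv (T t)) ** T t"

lemma regular_frame_mult:
  assumes X: "regular_frame S X" and Y: "regular_frame S Y"
  shows "regular_frame S (\<lambda>t. X t ** Y t)"
  unfolding regular_frame_def
proof (intro conjI ballI)
  fix t
  assume "t \<in> S"
  then have "(X has_vector_derivative vector_derivative X (at t within S)) (at t within S)"
    and "(Y has_vector_derivative vector_derivative Y (at t within S)) (at t within S)"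
    using X Y by (simp_all add: regular_frame_def vector_derivative_works)
  then show "(\<lambda>t. X t ** Y t) differentiable at t within S"
    by (rule differentiableI_vector[OF has_vector_derivative_matrix_mult])
  show "invertible (X t ** Y t)"
    using X Y \<open>t \<in> S\<close> by (simp add: regular_frame_def invertible_mult)
next
  have "bounded ((\<lambda>t. matrix_inv (Y t) ** matrix_inv (X t)) ` S)"
    using X Y unfolding regular_frame_def
    by (intro bounded_bilinear_bounded_image[OF bounded_bilinear_matrix_matrix_mult]) auto
  moreover have "(\<lambda>t. matrix_inv (X t ** Y t)) ` S = (\<lambda>t. matrix_inv (Y t) ** matrix_inv (X t)) ` S"
    using X Y by (intro image_cong refl) (simp add: regular_frame_def matrix_inv_mult)
  ultimately show "bounded ((\<lambda>t. matrix_inv (X t ** Y t)) ` S)"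
    by simp
qed

lemma regular_frame_prodint:
  fixes B :: "real \<Rightarrow> 'n::finite cmat"
  assumes "a \<le> b" and "continuous_on {a..b} B"
  shows "regular_frame {a..b} (prodint B a)"
  unfolding regular_frame_def
proof (intro conjI ballI)
  fix t
  assume "t \<in> {a..b}"
  then show "prodint B a differentiable at t within {a..b}"
    using prodint_fundamental(1)[OF assms] unfolding solves_lin_ode_def
    by (blast intro: differentiableI_vector)
  show "invertible (prodint B a t)"
    using invertible_prodint[OF assms \<open>t \<in> {a..b}\<close>] .
next
  show "bounded ((\<lambda>t. matrix_inv (prodint B a t)) ` {a..b})"
    by (intro compact_imp_bounded compact_continuous_image continuous_on_prodint(2)[OF assms] compact_Icc)
qed

lemma solves_lin_ode_gauge_transform:
  assumes T: "regular_frame {a..b} T" and Q: "solves_lin_ode A a b Q"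
  shows "solves_lin_ode (gauge_transform {a..b} T A) a b (\<lambda>t. matrix_inv (T t) ** Q t ** M)"
  unfolding solves_lin_ode_def
proof
  fix t
  assume t: "t \<in> {a..b}"
  define Ti where "Ti t = matrix_inv (T t)" for t
  define T' where "T' = vector_derivative T (at t within {a..b})"
  have TiT: "Ti t ** T t = mat 1" "Ti t ** (T t ** N) = N" "T t ** (Ti t ** N) = N" for N
    using matrix_inv_left_right[of "T t"] T t
    by (auto simp: Ti_def regular_frame_def matrix_mul_assoc)
  have "(T has_vector_derivative T') (at t within {a..b})"
    using T t by (simp add: regular_frame_def T'_def vector_derivative_works)
  moreover have "matrix_inv (T u) ** T u = mat 1" if "u \<in> {a..b}" for u
    using T that by (simp add: regular_frame_def matrix_inv_left_right)
  ultimately have "(Ti has_vector_derivative - (Ti t ** T' ** Ti t)) (at t within {a..b})"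
    unfolding Ti_def[abs_def] using T t
    by (intro has_vector_derivative_matrix_inverse) (auto simp: regular_frame_def)
  then have "((\<lambda>t. Ti t ** Q t) has_vector_derivative Ti t ** (A t ** Q t) + - (Ti t ** T' ** Ti t) ** Q t)
      (at t within {a..b})"
    using Q t unfolding solves_lin_ode_def by (intro has_vector_derivative_matrix_mult) auto
  from has_vector_derivative_matrix_mult[OF this has_vector_derivative_const]
  have "((\<lambda>t. Ti t ** Q t ** M) has_vector_derivative
      (Ti t ** (A t ** Q t) + - (Ti t ** T' ** Ti t) ** Q t) ** M) (at t within {a..b})"
    by simp
  moreover have "(Ti t ** (A t ** Q t) + - (Ti t ** T' ** Ti t) ** Q t) ** M =
      gauge_transform {a..b} T A t ** (Ti t ** Q t ** M)"
    unfolding gauge_transform_def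
    by (simp add: Ti_def[symmetric] T'_def[symmetric] matrix_mul_assoc[symmetric] TiT
        matrix_add_rdistrib matrix_diff_ldistrib matrix_diff_rdistrib)
  ultimately show "((\<lambda>t. matrix_inv (T t) ** Q t ** M) has_vector_derivative
      gauge_transform {a..b} T A t ** (matrix_inv (T t) ** Q t ** M)) (at t within {a..b})"
    by (simp add: Ti_def)
qed

lemma solves_adjoint_ode_gauge_transform:
  assumes T: "regular_frame {a..b} T" and G: "solves_adjoint_ode A a b G"
  shows "solves_adjoint_ode (gauge_transform {a..b} T A) a b (\<lambda>t. M ** G t ** T t)"
  unfolding solves_adjoint_ode_def
proof
  fix t
  assume t: "t \<in> {a..b}"
  define T' where "T' = vector_derivative T (at t within {a..b})"
  have TTi: "T t ** (matrix_inv (T t) ** N) = N" "matrix_inv (T t) ** T t = mat 1" for N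
    using matrix_inv_left_right[of "T t"] T t by (auto simp: regular_frame_def matrix_mul_assoc)
  have "(G has_vector_derivative - (G t ** A t)) (at t within {a..b})"
    using G t unfolding solves_adjoint_ode_def by blast
  then have "((\<lambda>t. M ** G t) has_vector_derivative M ** - (G t ** A t)) (at t within {a..b})"
    using has_vector_derivative_matrix_mult[OF has_vector_derivative_const] by fastforce
  moreover have "(T has_vector_derivative T') (at t within {a..b})"
    using T t by (simp add: regular_frame_def T'_def vector_derivative_works)
  ultimately have "((\<lambda>t. M ** G t ** T t) has_vector_derivative M ** G t ** T' + M ** - (G t ** A t) ** T t)
      (at t within {a..b})"
    by (rule has_vector_derivative_matrix_mult)
  moreover have "M ** G t ** T' + M ** - (G t ** A t) ** T t =
      - (M ** G t ** T t ** gauge_transform {a..b} T A t)"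
    unfolding gauge_transform_def T'_def[symmetric]
    by (simp add: matrix_mul_assoc[symmetric] TTi matrix_diff_ldistrib matrix_diff_rdistrib)
  ultimately show "((\<lambda>t. M ** G t ** T t) has_vector_derivative
      - (M ** G t ** T t ** gauge_transform {a..b} T A t)) (at t within {a..b})"
    by simp
qed

lemma prodint_gauge_transform:
  fixes A T :: "real \<Rightarrow> 'n::finite cmat"
  assumes "a \<le> b" and A: "continuous_on {a..b} A" and T: "regular_frame {a..b} T" and t: "t \<in> {a..b}"
  shows "prodint (gauge_transform {a..b} T A) a t = matrix_inv (T t) ** prodint A a t ** T a"
proof -
  let ?W = "\<lambda>t. matrix_inv (T t) ** prodint A a t ** T a"
  let ?H = "\<lambda>t. matrix_inv (T a) ** matrix_inv (prodint A a t) ** T t"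
  have "matrix_inv (T a) ** T a = mat 1"
    using T \<open>a \<le> b\<close> by (simp add: regular_frame_def matrix_inv_left_right)
  moreover have "matrix_inv (mat 1 :: 'n cmat) = mat 1"
    by (simp add: matrix_inv_eqI)
  ultimately have W: "?W a = mat 1" and H: "?H a = mat 1"
    by (simp_all add: prodint_refl)
  have sol: "solves_lin_ode (gauge_transform {a..b} T A) a b ?W"
    by (rule solves_lin_ode_gauge_transform[OF T prodint_fundamental(1)[OF \<open>a \<le> b\<close> A]])
  have adj: "solves_adjoint_ode (gauge_transform {a..b} T A) a b ?H"
    by (rule solves_adjoint_ode_gauge_transform[OF T prodint_fundamental(2)[OF \<open>a \<le> b\<close> A]])
  show ?thesis
    using prodint_eqI(1)[where F = ?W and G = ?H, OF W sol H adj t] by simp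
qed

section \<open>Product integrals depending on a parameter\<close>

context
  fixes B :: "real \<times> real \<Rightarrow> 'n::finite cmat" and a b c d :: real
  assumes "a \<le> b" and B: "continuous_on ({a..b} \<times> {c..d}) B"
begin

lemma prodint_parameter_variation:
  assumes s: "s \<in> {a..b}" and t: "t \<in> {c..d}" and t': "t' \<in> {c..d}"
  shows "prodint (\<lambda>s. B (s, t')) a s - prodint (\<lambda>s. B (s, t)) a s =
    prodint (\<lambda>s. B (s, t)) a s ** integral {a..s}
      (\<lambda>u. matrix_inv (prodint (\<lambda>s. B (s, t)) a u) ** (B (u, t') - B (u, t)) ** prodint (\<lambda>s. B (s, t')) a u)"
proof -
  let ?F = "prodint (\<lambda>s. B (s, t)) a" and ?F' = "prodint (\<lambda>s. B (s, t')) a"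
  note F = prodint_fundamental[OF \<open>a \<le> b\<close> continuous_on_section_fst[OF B t]]
  note F' = prodint_fundamental[OF \<open>a \<le> b\<close> continuous_on_section_fst[OF B t']]
  have "matrix_inv (mat 1 :: 'n cmat) = mat 1"
    by (simp add: matrix_inv_eqI)
  then have "integral {a..s} (\<lambda>u. matrix_inv (?F u) ** (B (u, t') - B (u, t)) ** ?F' u) =
      matrix_inv (?F s) ** ?F' s - mat 1"
    using adjoint_mult_solution_has_integral[OF F'(1) F(2) s] by (simp add: prodint_refl integral_unique)
  moreover have "?F s ** matrix_inv (?F s) = mat 1"
    using F(3)[OF s] matrix_left_right_inverse by blast
  ultimately show ?thesis
    by (simp add: matrix_diff_ldistrib matrix_mul_assoc)
qed

lemma prodint_parameter_bounded:
  obtains C where "\<And>s t. s \<in> {a..b} \<Longrightarrow> t \<in> {c..d} \<Longrightarrow> norm (prodint (\<lambda>s. B (s, t)) a s) \<le> C"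
    and "\<And>s t. s \<in> {a..b} \<Longrightarrow> t \<in> {c..d} \<Longrightarrow> norm (matrix_inv (prodint (\<lambda>s. B (s, t)) a s)) \<le> C"
proof -
  obtain K where K: "0 < K" "\<And>(x :: 'n cmat) (y :: 'n cmat). norm (x ** y) \<le> norm x * norm y * K"
    using matrix_mult_norm_bound by blast
  obtain M where "\<forall>p\<in>{a..b} \<times> {c..d}. norm (B p) \<le> M"
    using compact_imp_bounded[OF compact_continuous_image[OF B]] by (auto simp: bounded_iff compact_Times)
  then show ?thesis
    using that norm_prodint_le[OF K(2) less_imp_le[OF K(1)] continuous_on_section_fst[OF B]] by (metis mem_Times_iff fst_conv snd_conv)
qed

lemma prodint_parameter_difference_quotient:
  assumes s: "s \<in> {a..b}" and t: "t \<in> {c..d}" and t': "t' \<in> {c..d}"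
  shows "(prodint (\<lambda>s. B (s, t')) a s - prodint (\<lambda>s. B (s, t)) a s) /\<^sub>R (t' - t) =
    prodint (\<lambda>s. B (s, t)) a s ** integral {a..s} (\<lambda>u. matrix_inv (prodint (\<lambda>s. B (s, t)) a u) **
      ((B (u, t') - B (u, t)) /\<^sub>R (t' - t)) ** prodint (\<lambda>s. B (s, t')) a u)"
  using prodint_parameter_variation[OF s t t'] by (simp add: matrix_scaleR_left matrix_scaleR_right)

lemma uniform_limit_prodint_parameter_variation_integrand:
  assumes t: "t \<in> {c..d}"
  shows "uniform_limit {a..b}
    (\<lambda>t' u. matrix_inv (prodint (\<lambda>s. B (s, t)) a u) ** (B (u, t') - B (u, t)) ** prodint (\<lambda>s. B (s, t')) a u)
    (\<lambda>u. 0) (at t within {c..d})"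
proof -
  note mult = bounded_bilinear_matrix_matrix_mult
  obtain C where C: "\<And>s t. s \<in> {a..b} \<Longrightarrow> t \<in> {c..d} \<Longrightarrow> norm (prodint (\<lambda>s. B (s, t)) a s) \<le> C"
    "\<And>s t. s \<in> {a..b} \<Longrightarrow> t \<in> {c..d} \<Longrightarrow> norm (matrix_inv (prodint (\<lambda>s. B (s, t)) a s)) \<le> C"
    using prodint_parameter_bounded by blast
  have near_t: "\<forall>\<^sub>F t' in at t within {c..d}. t' \<in> {c..d}"
    by (simp add: eventually_at_filter)
  have "uniform_limit {a..b} (\<lambda>t' u. B (u, t') - B (u, t)) (\<lambda>u. 0) (at t within {c..d})"
    using uniform_limit_minus[OF uniform_limit_at_parameter[OF B compact_Icc compact_Icc t]
        uniform_limit_const[where c = "\<lambda>u. B (u, t)"]] by simp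
  then have "uniform_limit {a..b} (\<lambda>t' u. matrix_inv (prodint (\<lambda>s. B (s, t)) a u) ** (B (u, t') - B (u, t)))
      (\<lambda>u. 0) (at t within {c..d})"
    by (rule bounded_bilinear_uniform_limit_null[OF bounded_bilinear.flip[OF mult] _ always_eventually,
        where C = C]) (use C(2) t in auto)
  then show ?thesis
    by (rule bounded_bilinear_uniform_limit_null[OF mult _ eventually_mono[OF near_t], where C = C])
      (use C(1) in auto)
qed

lemma uniform_limit_prodint_parameter:
  assumes t: "t \<in> {c..d}"
  shows "uniform_limit {a..b} (\<lambda>t' s. prodint (\<lambda>s. B (s, t')) a s) (\<lambda>s. prodint (\<lambda>s. B (s, t)) a s)
    (at t within {c..d})"
proof -
  note mult = bounded_bilinear_matrix_matrix_mult
  define F where "F t s = prodint (\<lambda>s. B (s, t)) a s" for t s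
  define g where "g t' u = matrix_inv (F t u) ** (B (u, t') - B (u, t)) ** F t' u" for t' u
  have near_t: "\<forall>\<^sub>F t' in at t within {c..d}. t' \<in> {c..d}"
    by (simp add: eventually_at_filter)
  have F_cont: "continuous_on {a..b} (F t')" "continuous_on {a..b} (\<lambda>s. matrix_inv (F t' s))"
    if "t' \<in> {c..d}" for t'
    unfolding F_def[abs_def] using continuous_on_prodint[OF \<open>a \<le> b\<close> continuous_on_section_fst[OF B that]]
    by auto
  have "continuous_on {a..b} (g t')" if "t' \<in> {c..d}" for t'
    unfolding g_def using F_cont[OF t] F_cont[OF that]
      continuous_on_section_fst[OF B t] continuous_on_section_fst[OF B that]
    by (intro bounded_bilinear.continuous_on[OF mult] continuous_on_diff)
  then have "uniform_limit {a..b} (\<lambda>t' s. integral {a..s} (g t')) (\<lambda>s. integral {a..s} (\<lambda>u. 0))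
      (at t within {c..d})"
    using near_t uniform_limit_prodint_parameter_variation_integrand[OF t] unfolding g_def[abs_def] F_def
    by (intro uniform_limit_indefinite_integral) (auto elim!: eventually_mono)
  then have "uniform_limit {a..b} (\<lambda>t' s. F t s ** integral {a..s} (g t')) (\<lambda>s. F t s ** 0)
      (at t within {c..d})"
    using compact_imp_bounded[OF compact_continuous_image[OF F_cont(1)[OF t]]]
    by (intro bounded_bilinear.bounded_uniform_limit[OF mult uniform_limit_const])
      (auto simp: image_constant_conv)
  moreover have "\<forall>\<^sub>F t' in at t within {c..d}. \<forall>s\<in>{a..b}. F t s ** integral {a..s} (g t') = F t' s - F t s"
    using near_t by eventually_elim (simp add: F_def g_def[abs_def] prodint_parameter_variation[OF _ t])
  ultimately have "uniform_limit {a..b} (\<lambda>t' s. F t' s - F t s) (\<lambda>s. 0) (at t within {c..d})"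
    by (simp add: uniform_limit_cong)
  from uniform_limit_add[OF this uniform_limit_const[where c = "F t"]] show ?thesis
    by (simp add: F_def)
qed

context
  fixes D :: "real \<times> real \<Rightarrow> 'n cmat"
  assumes D: "continuous_on ({a..b} \<times> {c..d}) D"
    and B_D: "\<And>s t. s \<in> {a..b} \<Longrightarrow> t \<in> {c..d} \<Longrightarrow>
      ((\<lambda>t. B (s, t)) has_vector_derivative D (s, t)) (at t within {c..d})"
begin

lemma uniform_limit_prodint_parameter_integrand:
  assumes t: "t \<in> {c..d}"
  shows "uniform_limit {a..b}
    (\<lambda>t' u. matrix_inv (prodint (\<lambda>s. B (s, t)) a u) ** ((B (u, t') - B (u, t)) /\<^sub>R (t' - t)) **
      prodint (\<lambda>s. B (s, t')) a u)
    (\<lambda>u. matrix_inv (prodint (\<lambda>s. B (s, t)) a u) ** D (u, t) ** prodint (\<lambda>s. B (s, t)) a u)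
    (at t within {c..d})"
proof (rule bounded_bilinear.bounded_uniform_limit[OF bounded_bilinear_matrix_matrix_mult])
  note mult = bounded_bilinear_matrix_matrix_mult
  have bounded_image: "bounded (f ` {a..b})" if "continuous_on {a..b} f" for f :: "real \<Rightarrow> 'n cmat"
    using compact_imp_bounded[OF compact_continuous_image[OF that compact_Icc]] .
  note F_cont = continuous_on_prodint[OF \<open>a \<le> b\<close> continuous_on_section_fst[OF B t]]
  have D_cont: "continuous_on {a..b} (\<lambda>u. D (u, t))"
    using continuous_on_section_fst[OF D t] .
  show "uniform_limit {a..b} (\<lambda>t' u. matrix_inv (prodint (\<lambda>s. B (s, t)) a u) ** ((B (u, t') - B (u, t)) /\<^sub>R (t' - t)))
      (\<lambda>u. matrix_inv (prodint (\<lambda>s. B (s, t)) a u) ** D (u, t)) (at t within {c..d})"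
    using uniform_limit_difference_quotient[OF D B_D t] F_cont(2) D_cont
    by (intro bounded_bilinear.bounded_uniform_limit[OF mult uniform_limit_const] bounded_image)
  show "uniform_limit {a..b} (\<lambda>t' u. prodint (\<lambda>s. B (s, t')) a u) (\<lambda>u. prodint (\<lambda>s. B (s, t)) a u)
      (at t within {c..d})"
    by (rule uniform_limit_prodint_parameter[OF t])
  show "bounded ((\<lambda>u. prodint (\<lambda>s. B (s, t)) a u) ` {a..b})"
    using bounded_image[OF F_cont(1)] by simp
  show "bounded ((\<lambda>u. matrix_inv (prodint (\<lambda>s. B (s, t)) a u) ** D (u, t)) ` {a..b})"
    using bounded_image[OF bounded_bilinear.continuous_on[OF mult F_cont(2) D_cont]] .
qed

lemma prodint_has_vector_derivative_parameter:
  assumes s: "s \<in> {a..b}" and t: "t \<in> {c..d}"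
  shows "((\<lambda>t. prodint (\<lambda>s. B (s, t)) a s) has_vector_derivative
      prodint (\<lambda>s. B (s, t)) a s ** integral {a..s}
        (\<lambda>u. matrix_inv (prodint (\<lambda>s. B (s, t)) a u) ** D (u, t) ** prodint (\<lambda>s. B (s, t)) a u))
    (at t within {c..d})"
proof -
  note mult = bounded_bilinear_matrix_matrix_mult
  define F where "F t s = prodint (\<lambda>s. B (s, t)) a s" for t s
  define g where "g t' u = matrix_inv (F t u) ** ((B (u, t') - B (u, t)) /\<^sub>R (t' - t)) ** F t' u" for t' u
  have near_t: "\<forall>\<^sub>F t' in at t within {c..d}. t' \<in> {c..d}"
    by (simp add: eventually_at_filter)
  have "continuous_on {a..b} (g t')" if "t' \<in> {c..d}" for t'
    unfolding g_def F_def
    using continuous_on_prodint[OF \<open>a \<le> b\<close> continuous_on_section_fst[OF B t]]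
      continuous_on_prodint(1)[OF \<open>a \<le> b\<close> continuous_on_section_fst[OF B that]]
      continuous_on_section_fst[OF B that] continuous_on_section_fst[OF B t]
    by (intro bounded_bilinear.continuous_on[OF mult] continuous_intros) auto
  then have "uniform_limit {a..b} (\<lambda>t' s. integral {a..s} (g t'))
      (\<lambda>s. integral {a..s} (\<lambda>u. matrix_inv (F t u) ** D (u, t) ** F t u)) (at t within {c..d})"
    using uniform_limit_prodint_parameter_integrand[OF t] near_t
      continuous_on_prodint[OF \<open>a \<le> b\<close> continuous_on_section_fst[OF B t]] continuous_on_section_fst[OF D t]
    unfolding g_def[abs_def] F_def
    by (intro uniform_limit_indefinite_integral bounded_bilinear.continuous_on[OF mult])
      (auto elim!: eventually_mono)
  then have "((\<lambda>t'. F t s ** integral {a..s} (g t')) \<longlongrightarrow>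
      F t s ** integral {a..s} (\<lambda>u. matrix_inv (F t u) ** D (u, t) ** F t u)) (at t within {c..d})"
    by (intro bounded_bilinear.tendsto[OF mult] tendsto_const tendsto_uniform_limitI[OF _ s])
  moreover have "\<forall>\<^sub>F t' in at t within {c..d}. F t s ** integral {a..s} (g t') = (F t' s - F t s) /\<^sub>R (t' - t)"
    using near_t
    by eventually_elim (simp add: F_def g_def[abs_def] prodint_parameter_difference_quotient[OF s t])
  ultimately show ?thesis
    unfolding has_vector_derivative_iff_difference_quotient F_def by (rule Lim_transform_eventually)
qed

lemma regular_frame_prodint_parameter:
  assumes s: "s \<in> {a..b}"
  shows "regular_frame {c..d} (\<lambda>t. prodint (\<lambda>s. B (s, t)) a s)"
  unfolding regular_frame_def
proof (intro conjI ballI)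
  fix t
  assume t: "t \<in> {c..d}"
  show "(\<lambda>t. prodint (\<lambda>s. B (s, t)) a s) differentiable at t within {c..d}"
    using prodint_has_vector_derivative_parameter[OF s t] by (rule differentiableI_vector)
  show "invertible (prodint (\<lambda>s. B (s, t)) a s)"
    using invertible_prodint[OF \<open>a \<le> b\<close> continuous_on_section_fst[OF B t] s] .
next
  obtain C where "\<And>t. t \<in> {c..d} \<Longrightarrow> norm (matrix_inv (prodint (\<lambda>s. B (s, t)) a s)) \<le> C"
    using prodint_parameter_bounded s by metis
  then show "bounded ((\<lambda>t. matrix_inv (prodint (\<lambda>s. B (s, t)) a s)) ` {c..d})"
    unfolding bounded_iff by blast
qed

end

end

theorem theorem1:
  fixes A0 A1 :: "real \<times> real \<Rightarrow> complex ^ 'n::finite ^ 'n"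
    and \<sigma>0 \<sigma>1 \<tau>0 \<tau>1 \<sigma> \<tau> :: real
  assumes "\<sigma>0 \<le> \<sigma>1" "\<tau>0 \<le> \<tau>1"
    and "C1_on_rect A0 ({\<sigma>0..\<sigma>1} \<times> {\<tau>0..\<tau>1})"
    and "C1_on_rect A1 ({\<sigma>0..\<sigma>1} \<times> {\<tau>0..\<tau>1})"
    and "\<sigma> \<in> {\<sigma>0..\<sigma>1}" "\<tau> \<in> {\<tau>0..\<tau>1}"
  defines "P \<equiv> \<lambda>s t. prodint (\<lambda>s'. A1 (s', t)) \<sigma>0 s"
    and "Q \<equiv> \<lambda>s t. prodint (\<lambda>t'. A0 (s, t')) \<tau>0 t"
  defines "T \<equiv> \<lambda>s t. P s t ** Q \<sigma>0 t"
  defines "W \<equiv> matrix_inv (Q \<sigma>0 \<tau>) ** matrix_inv (P \<sigma> \<tau>) ** Q \<sigma> \<tau> ** P \<sigma> \<tau>0"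
    and "L \<equiv> \<lambda>t'. vector_derivative (\<lambda>t. T \<sigma> t) (at t' within {\<tau>0..\<tau>1}) ** matrix_inv (T \<sigma> t')"
  shows "W = matrix_inv (T \<sigma> \<tau>) ** Q \<sigma> \<tau> ** P \<sigma> \<tau>0
       \<and> W = prodint (\<lambda>t'. matrix_inv (T \<sigma> t') ** (A0 (\<sigma>, t') - L t') ** T \<sigma> t') \<tau>0 \<tau>"
proof -
  note \<sigma> = assms(5) and \<tau> = assms(6)
  have A0: "continuous_on ({\<sigma>0..\<sigma>1} \<times> {\<tau>0..\<tau>1}) A0" and A1: "continuous_on ({\<sigma>0..\<sigma>1} \<times> {\<tau>0..\<tau>1}) A1"
    using assms(3,4) by (auto intro: C1_on_rect_imp_continuous_on)
  obtain D where D: "continuous_on ({\<sigma>0..\<sigma>1} \<times> {\<tau>0..\<tau>1}) D"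
    and A1_D: "\<And>s t. s \<in> {\<sigma>0..\<sigma>1} \<Longrightarrow> t \<in> {\<tau>0..\<tau>1} \<Longrightarrow>
      ((\<lambda>t. A1 (s, t)) has_vector_derivative D (s, t)) (at t within {\<tau>0..\<tau>1})"
    using C1_on_rect_partial_derivative_snd[OF assms(4)] by blast
  have P: "regular_frame {\<tau>0..\<tau>1} (P \<sigma>)"
    unfolding P_def by (rule regular_frame_prodint_parameter[OF assms(1) A1 D A1_D \<sigma>])
  have Q: "regular_frame {\<tau>0..\<tau>1} (Q \<sigma>0)"
    unfolding Q_def using regular_frame_prodint[OF assms(2) continuous_on_section_snd[OF A0]] assms(1) by simp
  have T: "regular_frame {\<tau>0..\<tau>1} (T \<sigma>)"
    unfolding T_def using regular_frame_mult[OF P Q] by simp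
  have "prodint (\<lambda>t'. matrix_inv (T \<sigma> t') ** (A0 (\<sigma>, t') - L t') ** T \<sigma> t') \<tau>0 \<tau> =
      matrix_inv (T \<sigma> \<tau>) ** Q \<sigma> \<tau> ** T \<sigma> \<tau>0"
    using prodint_gauge_transform[OF assms(2) continuous_on_section_snd[OF A0 \<sigma>] T \<tau>]
    unfolding gauge_transform_def[abs_def] L_def Q_def by simp
  moreover have "T \<sigma> \<tau>0 = P \<sigma> \<tau>0"
    by (simp add: T_def Q_def prodint_refl)
  moreover have "matrix_inv (T \<sigma> \<tau>) = matrix_inv (Q \<sigma>0 \<tau>) ** matrix_inv (P \<sigma> \<tau>)"
    using P Q \<tau> by (simp add: T_def regular_frame_def matrix_inv_mult)
  ultimately show ?thesis
    unfolding W_def by simp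
qed

end
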